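(* For every graph $G$, $pw(G) \leq 2\, mw(G)$, where $pw(G)$ is the pathwidth and $mw(G)$ the matching width of $G$.
   Context: For a permutation $SV=(v_1,\dots,v_n)$ of $V(G)$ and $1\le i\le n$, let $V_i=\{v_1,\dots,v_i\}$ and let $G_i$ be the graph on $V(G)$ whose edges are the edges of $G$ with one end in $V_i$ and the other in $V(G)\setminus V_i$. The matching width of $SV$ is $\max_i \nu(G_i)$, where $\nu$ denotes maximum matching size, and the matching width $mw(G)$ is the minimum of this quantity over all permutations $SV$ of $V(G)$. Pathwidth is the standard notion. *)

theory Defs
  imports Main
begin

definition graph :: "'a set \<Rightarrow> 'a set set \<Rightarrow> bool" where
  "graph V E \<longleftrightarrow> finite V \<and> (\<forall>e\<in>E. \<exists>u v. e = {u, v} \<and> u \<noteq> v \<and> u \<in> V \<and> v \<in> V)"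

definition matching :: "'a set set \<Rightarrow> bool" where
  "matching M \<longleftrightarrow> (\<forall>e\<in>M. \<forall>f\<in>M. e \<noteq> f \<longrightarrow> e \<inter> f = {})"

definition matching_number :: "'a set set \<Rightarrow> nat" where
  "matching_number E = Max {card M | M. M \<subseteq> E \<and> matching M}"

definition cut_edges :: "'a set set \<Rightarrow> 'a set \<Rightarrow> 'a set set" where
  "cut_edges E S = {e \<in> E. e \<inter> S \<noteq> {} \<and> e - S \<noteq> {}}"

text \<open>Matching width of a vertex ordering vs = (v_1,...,v_n); i = 0 adds only the
  trivial value 0, so this equals the maximum over 1 <= i <= n.\<close>
definition mw_order :: "'a set set \<Rightarrow> 'a list \<Rightarrow> nat" where
  "mw_order E vs = Max {matching_number (cut_edges E (set (take i vs))) | i. i \<le> length vs}"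

definition vertex_orderings :: "'a set \<Rightarrow> 'a list set" where
  "vertex_orderings V = {vs. distinct vs \<and> set vs = V}"

definition matching_width :: "'a set \<Rightarrow> 'a set set \<Rightarrow> nat" where
  "matching_width V E = Min (mw_order E ` vertex_orderings V)"

definition path_decomposition :: "'a set \<Rightarrow> 'a set set \<Rightarrow> 'a set list \<Rightarrow> bool" where
  "path_decomposition V E P \<longleftrightarrow>
     (\<forall>B\<in>set P. B \<subseteq> V) \<and> \<Union>(set P) = V \<and>
     (\<forall>e\<in>E. \<exists>B\<in>set P. e \<subseteq> B) \<and>
     (\<forall>v i j k. i \<le> j \<and> j \<le> k \<and> k < length P \<and> v \<in> P ! i \<and> v \<in> P ! k \<longrightarrow> v \<in> P ! j)"

definition pathwidth :: "'a set \<Rightarrow> 'a set set \<Rightarrow> int" where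
  "pathwidth V E = int (LEAST k. \<exists>P. path_decomposition V E P \<and> (\<forall>B\<in>set P. card B \<le> k)) - 1"

end

theory Submission imports Defs begin

text \<open>Fix an ordering v_1, ..., v_n of optimal matching width. For every prefix V_t keep a
  maximal matching M_t of the cut graph G_t, obtaining M_(t+1) by extending the edges of M_t
  that avoid v_(t+1). Then |M_t| \<le> \<nu>(G_t) \<le> mw, and the bag of v_p, made of v_p, the ends
  of M_(p-1) inside V_(p-1) and the ends of M_p outside V_p, has at most 2 mw + 1 vertices.
  An outer vertex keeps its M_t-edge until it is reached, and an inner vertex never gains a
  new one, so the bags containing a vertex are contiguous; maximality of the M_t puts every
  edge into some bag.\<close>

definition maximal_matching :: "'a set set \<Rightarrow> 'a set set \<Rightarrow> bool" where
  "maximal_matching C M \<longleftrightarrow> M \<subseteq> C \<and> matching M \<and> (\<forall>e\<in>C. e \<inter> \<Union>M \<noteq> {})"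

lemma matching_subset: "matching M \<Longrightarrow> N \<subseteq> M \<Longrightarrow> matching N"
  unfolding matching_def by blast

lemma maximal_matching_extends:
  assumes "finite C" "\<forall>e\<in>C. e \<noteq> {}" "M0 \<subseteq> C" "matching M0"
  shows "\<exists>M. M0 \<subseteq> M \<and> maximal_matching C M"
  using assms(3,4)
proof (induction "card (C - M0)" arbitrary: M0 rule: less_induct)
  case less
  show ?case
  proof (cases "\<forall>e\<in>C. e \<inter> \<Union>M0 \<noteq> {}")
    case True
    then show ?thesis using less.prems unfolding maximal_matching_def by blast
  next
    case False
    then obtain e where e: "e \<in> C" "e \<inter> \<Union>M0 = {}" by blast
    then have "e \<notin> M0" using assms(2) by blast
    have "card (C - insert e M0) < card (C - M0)"
      using e \<open>e \<notin> M0\<close> assms(1) by (intro psubset_card_mono) auto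
    moreover have "insert e M0 \<subseteq> C" using e less.prems(1) by blast
    moreover have "matching (insert e M0)" using less.prems(2) e unfolding matching_def by blast
    ultimately have "\<exists>M. insert e M0 \<subseteq> M \<and> maximal_matching C M"
      by (rule less.hyps)
    then show ?thesis by blast
  qed
qed

lemma card_le_matching_number:
  assumes "finite C" "M \<subseteq> C" "matching M"
  shows "card M \<le> matching_number C"
proof -
  have "{card M | M. M \<subseteq> C \<and> matching M} \<subseteq> card ` Pow C" by auto
  then have "finite {card M | M. M \<subseteq> C \<and> matching M}"
    using assms(1) finite_subset by blast
  then show ?thesis
    unfolding matching_number_def using assms(2,3) by (intro Max_ge) auto
qed

lemma cut_edges_insert: "e \<in> cut_edges E S \<Longrightarrow> v \<notin> e \<Longrightarrow> e \<in> cut_edges E (insert v S)"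
  unfolding cut_edges_def by auto

lemma cut_edge_doubleton:
  assumes "card e = 2" "e \<in> cut_edges E S"
  shows "\<exists>x y. e = {x, y} \<and> x \<in> S \<and> y \<notin> S"
proof -
  obtain x y where e: "e = {x, y}" using assms(1) by (meson card_2_iff)
  have "e \<inter> S \<noteq> {}" "e - S \<noteq> {}" using assms(2) unfolding cut_edges_def by auto
  then consider "x \<in> S" "y \<notin> S" | "y \<in> S" "x \<notin> S" using e by blast
  then show ?thesis
  proof cases
    case 1
    then show ?thesis using e by blast
  next
    case 2
    moreover have "e = {y, x}" using e by auto
    ultimately show ?thesis by blast
  qed
qed

lemma card_Union_cut_edges_le:
  assumes "finite M" "\<forall>e\<in>M. card e = 2" "M \<subseteq> cut_edges E S"
  shows "card (\<Union>M \<inter> S) \<le> card M" and "card (\<Union>M - S) \<le> card M"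
proof -
  have sides: "card (e \<inter> S) = 1 \<and> card (e - S) = 1" if e: "e \<in> M" for e
  proof -
    obtain x y where "e = {x, y}" "x \<in> S" "y \<notin> S"
      using cut_edge_doubleton[of e E S] e assms(2,3) by blast
    then have "e \<inter> S = {x}" "e - S = {y}" by auto
    then show ?thesis by simp
  qed
  have "card (\<Union>e\<in>M. e \<inter> S) \<le> (\<Sum>e\<in>M. card (e \<inter> S))"
    using assms(1) by (rule card_UN_le)
  also have "\<dots> = card M" using sides by simp
  also have "(\<Union>e\<in>M. e \<inter> S) = \<Union>M \<inter> S" by blast
  finally show "card (\<Union>M \<inter> S) \<le> card M" .
  have "card (\<Union>e\<in>M. e - S) \<le> (\<Sum>e\<in>M. card (e - S))"
    using assms(1) by (rule card_UN_le)
  also have "\<dots> = card M" using sides by simp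
  also have "(\<Union>e\<in>M. e - S) = \<Union>M - S" by blast
  finally show "card (\<Union>M - S) \<le> card M" .
qed

definition next_matching :: "'a set set \<Rightarrow> 'a set \<Rightarrow> 'a \<Rightarrow> 'a set set \<Rightarrow> 'a set set" where
  "next_matching E S v M =
     (SOME M'. {e \<in> M. v \<notin> e} \<subseteq> M' \<and> maximal_matching (cut_edges E (insert v S)) M')"

lemma finite_cut_edges: "finite E \<Longrightarrow> finite (cut_edges E S)"
  unfolding cut_edges_def by simp

lemma next_matching:
  assumes "finite E" "maximal_matching (cut_edges E S) M"
  shows "{e \<in> M. v \<notin> e} \<subseteq> next_matching E S v M"
    and "maximal_matching (cut_edges E (insert v S)) (next_matching E S v M)"
proof -
  let ?succ = "\<lambda>M'. {e \<in> M. v \<notin> e} \<subseteq> M' \<and> maximal_matching (cut_edges E (insert v S)) M'"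
  have "\<exists>M'. ?succ M'"
  proof (rule maximal_matching_extends)
    show "finite (cut_edges E (insert v S))" using assms(1) by (rule finite_cut_edges)
    show "\<forall>e\<in>cut_edges E (insert v S). e \<noteq> {}" unfolding cut_edges_def by blast
    show "{e \<in> M. v \<notin> e} \<subseteq> cut_edges E (insert v S)"
      using assms(2) unfolding maximal_matching_def by (auto intro: cut_edges_insert)
    show "matching {e \<in> M. v \<notin> e}"
      using assms(2) unfolding maximal_matching_def by (auto intro: matching_subset)
  qed
  then have "?succ (next_matching E S v M)"
    unfolding next_matching_def by (rule someI_ex)
  then show "{e \<in> M. v \<notin> e} \<subseteq> next_matching E S v M"
    and "maximal_matching (cut_edges E (insert v S)) (next_matching E S v M)" by simp_all
qed

lemma matched_outside_stays_matched:
  assumes "\<forall>e\<in>E. card e = 2" "maximal_matching (cut_edges E S) M" "{e \<in> M. v \<notin> e} \<subseteq> M'"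
    and "v \<notin> S" "x \<notin> insert v S" "x \<in> \<Union>M"
  shows "x \<in> \<Union>M'"
proof -
  obtain e where e: "e \<in> M" "x \<in> e" using assms(6) by blast
  then have "e \<in> cut_edges E S" using assms(2) unfolding maximal_matching_def by blast
  then obtain a y where "e = {a, y}" "a \<in> S" "y \<notin> S"
    using assms(1) cut_edge_doubleton unfolding cut_edges_def by blast
  then have "v \<notin> e" using assms(4,5) e(2) by auto
  then show ?thesis using e assms(3) by blast
qed

text \<open>An edge of M' at an inner vertex unmatched by M is also a cut edge of S; its outer end is
  covered by an edge of M, which avoids v and therefore survives into M'.\<close>
lemma matched_inside_was_matched:
  assumes "\<forall>e\<in>E. card e = 2" "maximal_matching (cut_edges E S) M"
    and "maximal_matching (cut_edges E (insert v S)) M'" "{e \<in> M. v \<notin> e} \<subseteq> M'"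
    and "v \<notin> S" "x \<in> S" "x \<in> \<Union>M'"
  shows "x \<in> \<Union>M"
proof (rule ccontr)
  assume unmatched: "x \<notin> \<Union>M"
  obtain e where e: "e \<in> M'" "x \<in> e" using assms(7) by blast
  have "e \<in> cut_edges E (insert v S)" using e(1) assms(3) unfolding maximal_matching_def by blast
  then have "e \<in> E" unfolding cut_edges_def by blast
  obtain a w where aw: "e = {a, w}" "w \<notin> insert v S"
    using cut_edge_doubleton \<open>e \<in> cut_edges E (insert v S)\<close> assms(1) \<open>e \<in> E\<close> by blast
  then have "x \<noteq> w" using assms(6) by blast
  have "e \<in> cut_edges E S"
    unfolding cut_edges_def using \<open>e \<in> E\<close> e(2) assms(6) aw by blast
  then obtain f where f: "f \<in> M" "e \<inter> f \<noteq> {}" using assms(2) unfolding maximal_matching_def by blast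
  have "w \<in> f" using f aw(1) e(2) \<open>x \<noteq> w\<close> unmatched by blast
  have "f \<in> cut_edges E S" using f(1) assms(2) unfolding maximal_matching_def by blast
  then have "f \<in> E" unfolding cut_edges_def by blast
  obtain c d where "f = {c, d}" "c \<in> S"
    using cut_edge_doubleton \<open>f \<in> cut_edges E S\<close> assms(1) \<open>f \<in> E\<close> by blast
  then have "v \<notin> f" using \<open>w \<in> f\<close> aw(2) assms(5) by blast
  then have "f \<in> M'" using f(1) assms(4) by blast
  moreover have "e \<noteq> f" using e(2) f(1) unmatched by blast
  moreover have "matching M'" using assms(3) unfolding maximal_matching_def by blast
  ultimately have "e \<inter> f = {}" using e(1) unfolding matching_def by blast
  then show False using \<open>w \<in> f\<close> aw(1) by blast
qed

lemma graph_finite_edges: "graph V E \<Longrightarrow> finite E"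
proof -
  assume g: "graph V E"
  then have "E \<subseteq> Pow V" unfolding graph_def by auto
  moreover have "finite V" using g unfolding graph_def by blast
  ultimately show ?thesis by (simp add: finite_subset)
qed

lemma graph_edge_card:
  assumes "graph V E" "e \<in> E"
  shows "card e = 2"
proof -
  obtain u v where "e = {u, v}" "u \<noteq> v" using assms unfolding graph_def by blast
  then show ?thesis by simp
qed

lemma graph_edges_subset: "graph V E \<Longrightarrow> \<Union>E \<subseteq> V"
  unfolding graph_def by auto

primrec prefix_matching :: "'a set set \<Rightarrow> 'a list \<Rightarrow> nat \<Rightarrow> 'a set set" where
  "prefix_matching E vs 0 = {}"
| "prefix_matching E vs (Suc t) =
     next_matching E (set (take t vs)) (vs ! t) (prefix_matching E vs t)"

declare prefix_matching.simps(2) [simp del]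

text \<open>Positions are 0-based: vs ! p is v_(p+1) and set (take p vs) is V_p.\<close>
definition matching_bag :: "'a set set \<Rightarrow> 'a list \<Rightarrow> nat \<Rightarrow> 'a set" where
  "matching_bag E vs p =
     insert (vs ! p) ((\<Union>(prefix_matching E vs p) \<inter> set (take p vs)) \<union>
                      (\<Union>(prefix_matching E vs (Suc p)) - set (take (Suc p) vs)))"

lemma nth_in_set_take_iff:
  assumes "distinct vs" "j < length vs"
  shows "vs ! j \<in> set (take t vs) \<longleftrightarrow> j < t"
proof
  assume "vs ! j \<in> set (take t vs)"
  then obtain i where "i < length vs" "i < t" "vs ! i = vs ! j"
    by (auto simp: in_set_conv_nth)
  then show "j < t" using assms by (simp add: nth_eq_iff_index_eq)
next
  assume "j < t"
  then show "vs ! j \<in> set (take t vs)"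
    using assms(2) by (metis in_set_conv_nth length_take min_less_iff_conj nth_take)
qed

lemma set_take_Suc:
  "n < length xs \<Longrightarrow> set (take (Suc n) xs) = insert (xs ! n) (set (take n xs))"
  by (simp add: take_Suc_conv_app_nth)

context
  fixes V :: "'a set" and E :: "'a set set" and vs :: "'a list"
  assumes graph: "graph V E" and ordering: "vs \<in> vertex_orderings V"
begin

lemma distinct_ordering: "distinct vs" and set_ordering: "set vs = V"
  using ordering unfolding vertex_orderings_def by auto

lemma prefix_matching_maximal:
  "t \<le> length vs \<Longrightarrow> maximal_matching (cut_edges E (set (take t vs))) (prefix_matching E vs t)"
proof (induction t)
  case 0
  then show ?case unfolding maximal_matching_def cut_edges_def matching_def by simp
next
  case (Suc t)
  then show ?case
    using next_matching(2)[OF graph_finite_edges[OF graph]]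
    by (simp add: set_take_Suc prefix_matching.simps(2))
qed

lemma prefix_matching_Suc_keeps:
  "t < length vs \<Longrightarrow> {e \<in> prefix_matching E vs t. vs ! t \<notin> e} \<subseteq> prefix_matching E vs (Suc t)"
  using next_matching(1)[OF graph_finite_edges[OF graph] prefix_matching_maximal]
  by (simp add: prefix_matching.simps(2))

lemma prefix_matching_persists:
  assumes "t \<le> u" "u \<le> j" "j < length vs" "vs ! j \<in> \<Union>(prefix_matching E vs t)"
  shows "vs ! j \<in> \<Union>(prefix_matching E vs u)"
  using assms(1,2,4)
proof (induction u rule: dec_induct)
  case (step n)
  have n: "n < length vs" using step.hyps(2) step.prems assms(3) by simp
  let ?S = "set (take n vs)"
  have "vs ! n \<notin> ?S" "vs ! j \<notin> insert (vs ! n) ?S"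
    using nth_in_set_take_iff[OF distinct_ordering] n assms(3) step.hyps(2) step.prems
    by (simp_all flip: set_take_Suc)
  then show ?case
    using matched_outside_stays_matched[of E ?S "prefix_matching E vs n" "vs ! n"
        "prefix_matching E vs (Suc n)" "vs ! j"]
      graph_edge_card[OF graph] prefix_matching_maximal[of n] prefix_matching_Suc_keeps[OF n]
      n step.IH step.prems
    by simp
qed simp

lemma prefix_matching_shrinks:
  assumes "t \<le> u" "u \<le> length vs" "j < t" "vs ! j \<in> \<Union>(prefix_matching E vs u)"
  shows "vs ! j \<in> \<Union>(prefix_matching E vs t)"
  using assms(1,2,4)
proof (induction t rule: inc_induct)
  case (step n)
  have n: "n < length vs" using step.hyps(2) step.prems by simp
  let ?S = "set (take n vs)"
  have "vs ! n \<notin> ?S" "vs ! j \<in> ?S"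
    using nth_in_set_take_iff[OF distinct_ordering] n assms(3) step.hyps(1) by simp_all
  then show ?case
    using matched_inside_was_matched[of E ?S "prefix_matching E vs n" "vs ! n"
        "prefix_matching E vs (Suc n)" "vs ! j"]
      graph_edge_card[OF graph] prefix_matching_maximal[of n] prefix_matching_maximal[of "Suc n"]
      prefix_matching_Suc_keeps[OF n] n step.IH step.prems
    by (simp add: set_take_Suc)
qed simp

lemma prefix_matching_subset_edges: "t \<le> length vs \<Longrightarrow> prefix_matching E vs t \<subseteq> E"
  using prefix_matching_maximal unfolding maximal_matching_def cut_edges_def by blast

lemma finite_prefix_matching: "t \<le> length vs \<Longrightarrow> finite (prefix_matching E vs t)"
  using prefix_matching_subset_edges graph_finite_edges[OF graph] finite_subset by blast

lemma card_prefix_matching_le: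
  assumes "t \<le> length vs"
  shows "card (prefix_matching E vs t) \<le> mw_order E vs"
proof -
  let ?\<nu> = "\<lambda>i. matching_number (cut_edges E (set (take i vs)))"
  have "card (prefix_matching E vs t) \<le> ?\<nu> t"
    using prefix_matching_maximal[OF assms]
      finite_cut_edges[OF graph_finite_edges[OF graph]]
    unfolding maximal_matching_def by (intro card_le_matching_number) auto
  also have "?\<nu> t \<le> mw_order E vs"
  proof -
    have "{?\<nu> i | i. i \<le> length vs} = ?\<nu> ` {..length vs}" by auto
    then have "finite {?\<nu> i | i. i \<le> length vs}" by simp
    then show ?thesis unfolding mw_order_def using assms by (intro Max_ge) auto
  qed
  finally show ?thesis .
qed

lemma card_matching_bag:
  assumes p: "p < length vs"
  shows "card (matching_bag E vs p) \<le> 2 * mw_order E vs + 1"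
proof -
  let ?M = "prefix_matching E vs" and ?S = "\<lambda>i. set (take i vs)"
  have edges: "t \<le> length vs \<Longrightarrow> \<forall>e\<in>?M t. card e = 2" for t
    using prefix_matching_subset_edges graph_edge_card[OF graph] by blast
  have cut: "t \<le> length vs \<Longrightarrow> ?M t \<subseteq> cut_edges E (?S t)" for t
    using prefix_matching_maximal unfolding maximal_matching_def by blast
  have "card (\<Union>(?M p) \<inter> ?S p) \<le> card (?M p)"
    using p
    by (intro card_Union_cut_edges_le(1)[where E = E] finite_prefix_matching edges cut) simp_all
  moreover have "card (\<Union>(?M (Suc p)) - ?S (Suc p)) \<le> card (?M (Suc p))"
    using p
    by (intro card_Union_cut_edges_le(2)[where E = E] finite_prefix_matching edges cut) simp_all
  moreover have "card (?M p) \<le> mw_order E vs" "card (?M (Suc p)) \<le> mw_order E vs"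
    using p by (simp_all add: card_prefix_matching_le)
  ultimately have
    "card ((\<Union>(?M p) \<inter> ?S p) \<union> (\<Union>(?M (Suc p)) - ?S (Suc p))) \<le> 2 * mw_order E vs"
    using card_Un_le[of "\<Union>(?M p) \<inter> ?S p" "\<Union>(?M (Suc p)) - ?S (Suc p)"] by linarith
  then show ?thesis unfolding matching_bag_def by (intro card_insert_le_m1) simp_all
qed

lemma matching_bag_subset: "p < length vs \<Longrightarrow> matching_bag E vs p \<subseteq> V"
  using prefix_matching_subset_edges[of p] prefix_matching_subset_edges[of "Suc p"]
    graph_edges_subset[OF graph] set_ordering
  unfolding matching_bag_def by auto

lemma mem_matching_bag_iff:
  assumes "j < length vs" "p < length vs"
  shows "vs ! j \<in> matching_bag E vs p \<longleftrightarrow>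
           p = j \<or> (j < p \<and> vs ! j \<in> \<Union>(prefix_matching E vs p))
                 \<or> (p < j \<and> vs ! j \<in> \<Union>(prefix_matching E vs (Suc p)))"
proof -
  have "vs ! j = vs ! p \<longleftrightarrow> p = j"
    using assms distinct_ordering by (auto simp: nth_eq_iff_index_eq)
  moreover have "vs ! j \<in> set (take p vs) \<longleftrightarrow> j < p"
    and "vs ! j \<in> set (take (Suc p) vs) \<longleftrightarrow> j < Suc p"
    using nth_in_set_take_iff[OF distinct_ordering assms(1)] by blast+
  moreover have "j < Suc p \<longleftrightarrow> \<not> p < j" by linarith
  ultimately show ?thesis unfolding matching_bag_def insert_iff Un_iff Int_iff Diff_iff
    by (metis less_irrefl)
qed

lemma matching_bag_interval:
  assumes "i \<le> m" "m \<le> k" "k < length vs" "j < length vs"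
    and "vs ! j \<in> matching_bag E vs i" "vs ! j \<in> matching_bag E vs k"
  shows "vs ! j \<in> matching_bag E vs m"
proof -
  consider "m = j" | "j < m" | "m < j" by linarith
  then show ?thesis
  proof cases
    case 1
    then show ?thesis using assms by (simp add: mem_matching_bag_iff)
  next
    case 2
    then have "vs ! j \<in> \<Union>(prefix_matching E vs k)"
      using assms by (simp add: mem_matching_bag_iff)
    then show ?thesis
      using 2 assms prefix_matching_shrinks[of m k j] by (simp add: mem_matching_bag_iff)
  next
    case 3
    then have "vs ! j \<in> \<Union>(prefix_matching E vs (Suc i))"
      using assms by (simp add: mem_matching_bag_iff)
    then show ?thesis
      using 3 assms prefix_matching_persists[of "Suc i" "Suc m" j] by (simp add: mem_matching_bag_iff)
  qed
qed

text \<open>Take the last bag t in [a, b] containing the earlier end. If t < b, the earlier end is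
  unmatched by the matching of the cut after position t, which the edge crosses, so the later
  end is matched there and lies in bag t as well.\<close>
lemma matching_bags_cover_edge:
  assumes ab: "a < b" and b: "b < length vs" and edge: "{vs ! a, vs ! b} \<in> E"
  shows "\<exists>p<length vs. vs ! a \<in> matching_bag E vs p \<and> vs ! b \<in> matching_bag E vs p"
proof -
  have a: "a < length vs" using ab b by simp
  let ?T = "{t. a \<le> t \<and> t \<le> b \<and> vs ! a \<in> matching_bag E vs t}"
  define t where "t = Max ?T"
  have fin: "finite ?T" by (rule finite_subset[of _ "{a..b}"]) auto
  have "a \<in> ?T" using ab by (simp add: matching_bag_def)
  then have "t \<in> ?T" unfolding t_def by (intro Max_in[OF fin]) blast
  then have t: "a \<le> t" "t \<le> b" "vs ! a \<in> matching_bag E vs t" by simp_all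
  show ?thesis
  proof (cases "t = b")
    case True
    then show ?thesis using t b by (auto simp: matching_bag_def)
  next
    case False
    then have "t < b" using t by simp
    have "Suc t \<notin> ?T" using Max_ge[OF fin, of "Suc t"] unfolding t_def[symmetric] by auto
    then have "vs ! a \<notin> \<Union>(prefix_matching E vs (Suc t))"
      using \<open>t < b\<close> t(1) a b mem_matching_bag_iff[OF a, of "Suc t"] by simp
    moreover have "{vs ! a, vs ! b} \<in> cut_edges E (set (take (Suc t) vs))"
      using edge t(1) \<open>t < b\<close> nth_in_set_take_iff[OF distinct_ordering] a b
      unfolding cut_edges_def by auto
    ultimately have "vs ! b \<in> \<Union>(prefix_matching E vs (Suc t))"
      using prefix_matching_maximal[of "Suc t"] \<open>t < b\<close> b unfolding maximal_matching_def by auto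
    then have "vs ! b \<in> matching_bag E vs t"
      using \<open>t < b\<close> b mem_matching_bag_iff[OF b, of t] by simp
    then show ?thesis using t(3) \<open>t < b\<close> b by (intro exI[of _ t]) simp
  qed
qed

lemma path_decomposition_matching_bags:
  "path_decomposition V E (map (matching_bag E vs) [0..<length vs])"
  unfolding path_decomposition_def
proof (intro conjI allI impI)
  let ?P = "map (matching_bag E vs) [0..<length vs]"
  have index: "\<exists>j<length vs. vs ! j = v" if "v \<in> V" for v
    using that set_ordering by (auto simp: in_set_conv_nth)
  have set_P: "set ?P = matching_bag E vs ` {..<length vs}" by auto
  show bags: "\<forall>B\<in>set ?P. B \<subseteq> V" using matching_bag_subset set_P by auto
  have "V \<subseteq> \<Union>(set ?P)"
  proof
    fix v assume "v \<in> V"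
    then obtain j where j: "j < length vs" "vs ! j = v" using index by blast
    then have "v \<in> matching_bag E vs j" unfolding matching_bag_def by simp
    then show "v \<in> \<Union>(set ?P)" using j(1) set_P by blast
  qed
  then show "\<Union>(set ?P) = V" using bags by blast
  show "\<forall>e\<in>E. \<exists>B\<in>set ?P. e \<subseteq> B"
  proof
    fix e assume "e \<in> E"
    then obtain x y where e: "e = {x, y}" "x \<noteq> y" "x \<in> V" "y \<in> V"
      using graph unfolding graph_def by blast
    obtain i k where ik: "i < length vs" "vs ! i = x" "k < length vs" "vs ! k = y"
      using index e(3,4) by blast
    then consider "i < k" | "k < i" using e(2) by fastforce
    then obtain p where "p < length vs" "x \<in> matching_bag E vs p" "y \<in> matching_bag E vs p"
    proof cases
      case 1
      then show ?thesis using that matching_bags_cover_edge[of i k] \<open>e \<in> E\<close> e(1) ik by blast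
    next
      case 2
      have "{vs ! k, vs ! i} \<in> E" using \<open>e \<in> E\<close> e(1) ik by (simp add: insert_commute)
      then show ?thesis using that matching_bags_cover_edge[of k i] 2 ik by blast
    qed
    then show "\<exists>B\<in>set ?P. e \<subseteq> B" using e(1) set_P by blast
  qed
  fix v i m k
  assume h: "i \<le> m \<and> m \<le> k \<and> k < length ?P \<and> v \<in> ?P ! i \<and> v \<in> ?P ! k"
  then have "k < length vs" "i < length vs" "m < length vs" by auto
  then have "v \<in> matching_bag E vs i" "v \<in> matching_bag E vs k" using h by auto
  then obtain j where "j < length vs" "vs ! j = v"
    using index matching_bag_subset \<open>i < length vs\<close> by blast
  then show "v \<in> ?P ! m"
    using matching_bag_interval[of i m k j] h \<open>k < length vs\<close> \<open>m < length vs\<close>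
      \<open>v \<in> matching_bag E vs i\<close> \<open>v \<in> matching_bag E vs k\<close> by simp
qed

end

lemma pathwidth_le:
  assumes "path_decomposition V E P" "\<forall>B\<in>set P. card B \<le> k + 1"
  shows "pathwidth V E \<le> int k"
proof -
  have "(LEAST k. \<exists>P. path_decomposition V E P \<and> (\<forall>B\<in>set P. card B \<le> k)) \<le> k + 1"
    using assms by (intro Least_le) blast
  then show ?thesis unfolding pathwidth_def by simp
qed

lemma matching_width_attained:
  assumes "finite V"
  obtains vs where "vs \<in> vertex_orderings V" "mw_order E vs = matching_width V E"
proof -
  have "vertex_orderings V \<subseteq> {xs. set xs \<subseteq> V \<and> length xs \<le> card V}"
    unfolding vertex_orderings_def using distinct_card by fastforce
  then have "finite (vertex_orderings V)"
    using finite_lists_length_le[OF assms] finite_subset by blast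
  moreover have "vertex_orderings V \<noteq> {}"
    using finite_distinct_list[OF assms] unfolding vertex_orderings_def by blast
  ultimately have "matching_width V E \<in> mw_order E ` vertex_orderings V"
    unfolding matching_width_def by (intro Min_in) auto
  then show ?thesis using that by auto
qed

theorem theorem7:
  fixes V :: "'a set" and E :: "'a set set"
  assumes "graph V E"
  shows "pathwidth V E \<le> 2 * int (matching_width V E)"
proof -
  obtain vs where vs: "vs \<in> vertex_orderings V" "mw_order E vs = matching_width V E"
    using matching_width_attained assms unfolding graph_def by blast
  let ?P = "map (matching_bag E vs) [0..<length vs]"
  have "path_decomposition V E ?P"
    using path_decomposition_matching_bags[OF assms vs(1)] .
  moreover have "\<forall>B\<in>set ?P. card B \<le> 2 * matching_width V E + 1"
    using card_matching_bag[OF assms vs(1)] vs(2) by auto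
  ultimately have "pathwidth V E \<le> int (2 * matching_width V E)"
    by (rule pathwidth_le)
  then show ?thesis by simp
qed

end
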